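(* Let $p_1,p_2,p_3,p_4$ be the joints of a framework in $\mathbb{R}^2$ forming a non-degenerate rhombus, with bars $p_1p_2$, $p_2p_3$, $p_3p_4$, $p_4p_1$. If $g$ is any infinitesimal motion of this framework and $v_i=g(p_i)$ for $i=1,2,3,4$, then $v_1+v_3=v_2+v_4$.
   Context: A framework in $\mathbb{R}^d$ is a finite graph whose vertices (joints) are distinct points of $\mathbb{R}^d$ and whose edges (bars) are segments between pairs of joints. If $F$ is a framework with joint set $X$, an infinitesimal motion of $F$ is a map $g:X\to\mathbb{R}^d$ with $(g(x)-g(y))\cdot(x-y)=0$ for every bar $xy$ of $F$. Non-degenerate rhombus means $p_2-p_1=p_3-p_4$ and $p_3-p_2=p_4-p_1$, these two vectors are linearly independent, and all four sides have equal length. *)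

theory Defs
  imports "HOL-Analysis.Analysis"
begin

text \<open>A framework in R^d: joint set X (finite) and bar set E, a set of unordered
  pairs {x,y} of distinct joints.\<close>

definition infinitesimal_motion ::
  "('a::euclidean_space) set \<Rightarrow> 'a set set \<Rightarrow> ('a \<Rightarrow> 'a) \<Rightarrow> bool" where
  "infinitesimal_motion X E g \<longleftrightarrow>
     (\<forall>x\<in>X. \<forall>y\<in>X. {x, y} \<in> E \<longrightarrow> (g x - g y) \<bullet> (x - y) = 0)"

definition nondegenerate_rhombus :: "real^2 \<Rightarrow> real^2 \<Rightarrow> real^2 \<Rightarrow> real^2 \<Rightarrow> bool" where
  "nondegenerate_rhombus p1 p2 p3 p4 \<longleftrightarrow>
     p2 - p1 = p3 - p4 \<and> p3 - p2 = p4 - p1 \<and>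
     independent {p2 - p1, p3 - p2} \<and> p2 - p1 \<noteq> p3 - p2 \<and>
     norm (p2 - p1) = norm (p3 - p2) \<and> norm (p3 - p2) = norm (p4 - p3) \<and>
     norm (p4 - p3) = norm (p1 - p4)"

end

theory Submission
  imports Defs
begin

(* Put w = v1 + v3 - v2 - v4. Opposite sides of the rhombus are parallel, so adding the bar
   conditions of p1p2 and p3p4 gives w . (p2 - p1) = 0, and adding those of p2p3 and p4p1 gives
   w . (p3 - p2) = 0. The two sides span the plane, hence w = 0. *)

lemma orthogonal_to_independent_dim_card_eq_0:
  fixes w :: "'a::euclidean_space"
  assumes "independent B" and "card B = DIM('a)" and "\<And>b. b \<in> B \<Longrightarrow> w \<bullet> b = 0"
  shows "w = 0"
proof -
  have "UNIV \<subseteq> span B"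
    using card_ge_dim_independent[of B UNIV] assms(1,2) by simp
  then have "orthogonal w w"
    using orthogonal_to_span[of w B w] assms(3) by (auto simp: orthogonal_def)
  then show ?thesis
    by (simp add: orthogonal_self)
qed

lemma parallelogram_motion_defect_orthogonal:
  fixes p1 p2 p3 p4 v1 v2 v3 v4 :: "'a::real_inner"
  assumes "p2 - p1 = p3 - p4" and "p3 - p2 = p4 - p1"
    and "(v1 - v2) \<bullet> (p1 - p2) = 0" and "(v2 - v3) \<bullet> (p2 - p3) = 0"
    and "(v3 - v4) \<bullet> (p3 - p4) = 0" and "(v4 - v1) \<bullet> (p4 - p1) = 0"
  shows "(v1 + v3 - v2 - v4) \<bullet> (p2 - p1) = 0"
    and "(v1 + v3 - v2 - v4) \<bullet> (p3 - p2) = 0"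
proof -
  have "(v1 + v3 - v2 - v4) \<bullet> (p2 - p1) = (v3 - v4) \<bullet> (p3 - p4) - (v1 - v2) \<bullet> (p1 - p2)"
    unfolding assms(1) [symmetric] by (simp add: inner_diff_left inner_diff_right algebra_simps)
  then show "(v1 + v3 - v2 - v4) \<bullet> (p2 - p1) = 0"
    using assms(3,5) by simp
  have "(v1 + v3 - v2 - v4) \<bullet> (p3 - p2) = (v2 - v3) \<bullet> (p2 - p3) - (v4 - v1) \<bullet> (p4 - p1)"
    unfolding assms(2) [symmetric] by (simp add: inner_diff_left inner_diff_right algebra_simps)
  then show "(v1 + v3 - v2 - v4) \<bullet> (p3 - p2) = 0"
    using assms(4,6) by simp
qed

lemma infinitesimal_motion_quadrilateral_bars:
  assumes "infinitesimal_motion {p1, p2, p3, p4} {{p1, p2}, {p2, p3}, {p3, p4}, {p4, p1}} g"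
  shows "(g p1 - g p2) \<bullet> (p1 - p2) = 0" and "(g p2 - g p3) \<bullet> (p2 - p3) = 0"
    and "(g p3 - g p4) \<bullet> (p3 - p4) = 0" and "(g p4 - g p1) \<bullet> (p4 - p1) = 0"
  using assms unfolding infinitesimal_motion_def by auto

theorem lemma3:
  fixes p1 p2 p3 p4 :: "real^2" and g :: "real^2 \<Rightarrow> real^2"
  assumes "nondegenerate_rhombus p1 p2 p3 p4"
    and "infinitesimal_motion {p1, p2, p3, p4} {{p1, p2}, {p2, p3}, {p3, p4}, {p4, p1}} g"
  shows "g p1 + g p3 = g p2 + g p4"
proof -
  have parallel: "p2 - p1 = p3 - p4" "p3 - p2 = p4 - p1"
    and sides_independent: "independent {p2 - p1, p3 - p2}"
    and sides_distinct: "p2 - p1 \<noteq> p3 - p2"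
    using assms(1) unfolding nondegenerate_rhombus_def by auto
  have "(g p1 + g p3 - g p2 - g p4) \<bullet> b = 0" if "b \<in> {p2 - p1, p3 - p2}" for b
    using that parallelogram_motion_defect_orthogonal[OF parallel
        infinitesimal_motion_quadrilateral_bars[OF assms(2)]]
    by auto
  moreover have "card {p2 - p1, p3 - p2} = DIM(real^2)"
    using sides_distinct by simp
  ultimately have "g p1 + g p3 - g p2 - g p4 = 0"
    using orthogonal_to_independent_dim_card_eq_0 sides_independent by blast
  then show ?thesis
    by (simp add: algebra_simps)
qed

end
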